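(* A norm on $\mathbb{R}^2$ is uniformly robust if and only if it is polyhedral.
   Context: A norm is a symmetric gauge (Minkowski functional of a symmetric convex compact set $B_\gamma$ with $0$ in its interior), with skewness $\sigma=1$; it is polyhedral if $B_\gamma$ is a polytope. For weighted sets, $(D,w)+(C,v)$ is $D\cup C$ with weights added at common points; a Fermat–Weber point of a finite positively weighted set is a minimizer of $x\mapsto\sum_s u_s\gamma(x-s)$. $\gamma$ is uniformly robust if for every finite $D$ with positive weights $w$ (total $w_D$) there is a bounded $K$ such that for every finite $C$ with positive weights $v$ with $\sigma v_C<w_D$, all Fermat–Weber points of $(D,w)+(C,v)$ lie in $K$. *)

theory Defs
  imports "HOL-Analysis.Analysis"
begin

definition gauge_of :: "('a::real_normed_vector) set \<Rightarrow> 'a \<Rightarrow> real" where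
  "gauge_of B x = Inf {t. t > 0 \<and> x \<in> (\<lambda>y. t *\<^sub>R y) ` B}"

definition norm_ball :: "('a::real_normed_vector) set \<Rightarrow> bool" where
  "norm_ball B \<longleftrightarrow> convex B \<and> compact B \<and> 0 \<in> interior B \<and> (\<forall>x\<in>B. - x \<in> B)"

definition wsum_weight :: "'a set \<Rightarrow> ('a \<Rightarrow> real) \<Rightarrow> 'a set \<Rightarrow> ('a \<Rightarrow> real) \<Rightarrow> 'a \<Rightarrow> real" where
  "wsum_weight D w C v s = (if s \<in> D then w s else 0) + (if s \<in> C then v s else 0)"

definition fermat_weber_points ::
  "('a::real_vector \<Rightarrow> real) \<Rightarrow> 'a set \<Rightarrow> ('a \<Rightarrow> real) \<Rightarrow> 'a set" where
  "fermat_weber_points \<gamma> S u =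
     {x. \<forall>y. (\<Sum>s\<in>S. u s * \<gamma> (x - s)) \<le> (\<Sum>s\<in>S. u s * \<gamma> (y - s))}"

text \<open>Uniform robustness (skewness sigma = 1 for norms).\<close>
definition uniformly_robust :: "(real^2 \<Rightarrow> real) \<Rightarrow> bool" where
  "uniformly_robust \<gamma> \<longleftrightarrow>
     (\<forall>D w. finite D \<and> (\<forall>s\<in>D. w s > 0) \<longrightarrow>
        (\<exists>K. bounded K \<and>
           (\<forall>C v. finite C \<and> (\<forall>s\<in>C. v s > 0) \<and> 1 * sum v C < sum w D \<longrightarrow>
              fermat_weber_points \<gamma> (D \<union> C) (wsum_weight D w C v) \<subseteq> K)))"

end

theory Submission
  imports Defs
begin

text \<open>If B is a polytope, the gauge is the maximum of finitely many linear functionals. Far away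
  from the points of D, the functionals active at x - s for s \<in> D share a direction e; moving x
  along -e decreases each D-term at rate \<gamma>(e) and increases each C-term at rate at most \<gamma>(e), so
  x is no Fermat--Weber point as soon as the D-weights outweigh the C-weights.

  If B is not a polytope, its extreme points accumulate at some z. Writing rot z = a y4 - b y1
  for nearly parallel extreme points y1, y4 close to z gives points x = a y4 arbitrarily far out
  with x - rot z = b y1. Robustness then says that x is no Fermat--Weber point of 0, rot z and x
  with weights 1, 1 and l, for any l < 2. This forces the supporting lines at y4 and y1 to meet
  on the unit sphere, which two further extreme points between y1 and y4 make impossible.\<close>

lemma nonneg_eq_if_same_pos_upper_bounds:
  fixes a b :: real
  assumes "a \<ge> 0" "b \<ge> 0" and bounds: "\<And>t. t > 0 \<Longrightarrow> a \<le> t \<longleftrightarrow> b \<le> t"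
  shows "a = b"
proof (rule ccontr)
  assume "a \<noteq> b"
  then have "(a + b) / 2 > 0" "min a b \<le> (a + b) / 2" "\<not> max a b \<le> (a + b) / 2"
    using assms(1,2) by (auto simp: min_def max_def field_simps)
  then show False
    using bounds[of "(a + b) / 2"] by (auto simp: min_def max_def split: if_splits)
qed

lemma wsum_decreases:
  fixes f g :: "'a \<Rightarrow> real"
  assumes D: "finite D" "\<forall>s\<in>D. w s > 0" and C: "finite C" "\<forall>s\<in>C. v s > 0"
    and less: "sum v C < sum w D" and "\<delta> > 0"
    and down: "\<And>s. s \<in> D \<Longrightarrow> g s \<le> f s - \<delta>" and up: "\<And>s. s \<in> C \<Longrightarrow> g s \<le> f s + \<delta>"
  shows "(\<Sum>s\<in>D \<union> C. wsum_weight D w C v s * g s) < (\<Sum>s\<in>D \<union> C. wsum_weight D w C v s * f s)"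
proof -
  define wD vC where "wD s = (if s \<in> D then w s else 0)" and "vC s = (if s \<in> C then v s else 0)"
    for s
  have term_le: "wsum_weight D w C v s * g s \<le> wsum_weight D w C v s * f s - \<delta> * (wD s - vC s)"
    for s
  proof -
    have "wD s * g s \<le> wD s * (f s - \<delta>)"
      using down[of s] D(2) by (auto simp: wD_def intro: mult_left_mono)
    moreover have "vC s * g s \<le> vC s * (f s + \<delta>)"
      using up[of s] C(2) by (auto simp: vC_def intro: mult_left_mono)
    moreover have "wsum_weight D w C v s = wD s + vC s" by (simp add: wsum_weight_def wD_def vC_def)
    ultimately show ?thesis by (simp add: algebra_simps)
  qed
  let ?U = "D \<union> C"
  have "finite ?U" using D C by simp
  have sums: "sum wD ?U = sum w D" "sum vC ?U = sum v C"
    using sum.inter_restrict[OF \<open>finite ?U\<close>, of w D] sum.inter_restrict[OF \<open>finite ?U\<close>, of v C]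
    by (simp_all add: wD_def vC_def Int_absorb1)
  have "(\<Sum>s\<in>?U. wsum_weight D w C v s * g s)
      \<le> (\<Sum>s\<in>?U. wsum_weight D w C v s * f s - \<delta> * (wD s - vC s))"
    by (rule sum_mono[OF term_le])
  also have "\<dots> = (\<Sum>s\<in>?U. wsum_weight D w C v s * f s) - \<delta> * (sum w D - sum v C)"
    by (simp add: sum_subtractf sum_distrib_left[symmetric] sums)
  also have "\<dots> < (\<Sum>s\<in>?U. wsum_weight D w C v s * f s)"
    using \<open>\<delta> > 0\<close> less by simp
  finally show ?thesis .
qed

section \<open>The gauge of a symmetric convex body\<close>

locale symmetric_convex_body =
  fixes B :: "'a::euclidean_space set"
  assumes norm_ball_B: "norm_ball B"
begin

abbreviation \<gamma> :: "'a \<Rightarrow> real" where "\<gamma> \<equiv> gauge_of B"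

lemma convex_B: "convex B" and compact_B: "compact B" and zero_in_interior_B: "0 \<in> interior B"
  and uminus_in_B: "x \<in> B \<Longrightarrow> - x \<in> B"
  using norm_ball_B by (auto simp: norm_ball_def)

lemma closed_B: "closed B"
  using compact_B compact_imp_closed by blast

lemma zero_in_B: "0 \<in> B"
  using zero_in_interior_B interior_subset by blast

lemma scaleR_in_B: "z \<in> B \<Longrightarrow> 0 \<le> c \<Longrightarrow> c \<le> 1 \<Longrightarrow> c *\<^sub>R z \<in> B"
  using convexD[OF convex_B zero_in_B, of z "1 - c" c] by auto

lemma absorbing_B: "\<exists>t>0. (1 / t) *\<^sub>R y \<in> B"
proof -
  obtain \<rho> where \<rho>: "\<rho> > 0" "cball 0 \<rho> \<subseteq> B"
    using zero_in_interior_B mem_interior_cball by blast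
  define t where "t = norm y / \<rho> + 1"
  have t: "t > 0" "norm y / t \<le> \<rho>"
    using \<rho>(1) by (auto simp: t_def field_simps add_pos_nonneg)
  then have "(1 / t) *\<^sub>R y \<in> cball 0 \<rho>" by simp
  with t \<rho> show ?thesis by blast
qed

lemma gauge_eq_Inf: "\<gamma> y = Inf {t. t > 0 \<and> (1 / t) *\<^sub>R y \<in> B}"
proof -
  have "y \<in> (\<lambda>z. t *\<^sub>R z) ` B \<longleftrightarrow> (1 / t) *\<^sub>R y \<in> B" if "t > 0" for t
    using that by (auto simp: image_iff intro!: bexI[of _ "(1 / t) *\<^sub>R y"])
  then show ?thesis unfolding gauge_of_def by (metis (lifting))
qed

lemma gauge_nonneg: "\<gamma> y \<ge> 0"
  unfolding gauge_eq_Inf using absorbing_B[of y] by (intro cInf_greatest) auto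

lemma gauge_le_iff:
  assumes "t > 0"
  shows "\<gamma> y \<le> t \<longleftrightarrow> (1 / t) *\<^sub>R y \<in> B"
proof
  let ?T = "{t. t > 0 \<and> (1 / t) *\<^sub>R y \<in> B}"
  have bdd: "bdd_below ?T" by (rule bdd_belowI[of _ 0]) simp
  {
    assume "(1 / t) *\<^sub>R y \<in> B"
    with assms have "t \<in> ?T" by simp
    then show "\<gamma> y \<le> t" unfolding gauge_eq_Inf using bdd by (rule cInf_lower)
  }
  assume le: "\<gamma> y \<le> t"
  have above: "(1 / s) *\<^sub>R y \<in> B" if "s > t" for s
  proof -
    have ne: "?T \<noteq> {}" using absorbing_B[of y] by blast
    have lt: "Inf ?T < s" using le that gauge_eq_Inf by simp
    obtain t' where "t' \<in> ?T" "t' < s" using cInf_lessD[OF ne lt] by blast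
    then have t': "t' > 0" "(1 / t') *\<^sub>R y \<in> B" "t' < s" by auto
    then have "(t' / s) *\<^sub>R ((1 / t') *\<^sub>R y) \<in> B"
      by (intro scaleR_in_B[OF t'(2)]) auto
    then show ?thesis using t' by simp
  qed
  have "((\<lambda>s. (1 / s) *\<^sub>R y) \<longlongrightarrow> (1 / t) *\<^sub>R y) (at_right t)"
    using assms by (intro tendsto_intros) auto
  moreover have "\<forall>\<^sub>F s in at_right t. (1 / s) *\<^sub>R y \<in> B"
    unfolding eventually_at_right_field using above by (intro exI[of _ "t + 1"]) auto
  ultimately show "(1 / t) *\<^sub>R y \<in> B"
    using Lim_in_closed_set[OF closed_B] by (metis trivial_limit_at_right_real)
qed

lemma gauge_le_one_iff: "\<gamma> y \<le> 1 \<longleftrightarrow> y \<in> B"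
  using gauge_le_iff[of 1 y] by simp

lemma gauge_zero [simp]: "\<gamma> 0 = 0"
  by (rule nonneg_eq_if_same_pos_upper_bounds) (use gauge_nonneg gauge_le_iff zero_in_B in auto)

lemma gauge_scaleR:
  assumes "c \<ge> 0"
  shows "\<gamma> (c *\<^sub>R y) = c * \<gamma> y"
proof (cases "c = 0")
  case False
  with assms have c: "c > 0" by simp
  show ?thesis
  proof (rule nonneg_eq_if_same_pos_upper_bounds)
    fix t :: real
    assume t: "t > 0"
    have "\<gamma> (c *\<^sub>R y) \<le> t \<longleftrightarrow> (1 / (t / c)) *\<^sub>R y \<in> B"
      using gauge_le_iff[OF t] c by simp
    also have "\<dots> \<longleftrightarrow> c * \<gamma> y \<le> t"
      using gauge_le_iff[of "t / c" y] c t by (simp add: field_simps)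
    finally show "\<gamma> (c *\<^sub>R y) \<le> t \<longleftrightarrow> c * \<gamma> y \<le> t" .
  qed (use gauge_nonneg c in auto)
qed simp

lemma gauge_uminus [simp]: "\<gamma> (- y) = \<gamma> y"
  by (rule nonneg_eq_if_same_pos_upper_bounds)
    (use gauge_nonneg gauge_le_iff uminus_in_B in \<open>auto, metis minus_minus scaleR_minus_right\<close>)

lemma gauge_triangle: "\<gamma> (y + z) \<le> \<gamma> y + \<gamma> z"
proof (rule field_le_epsilon)
  fix e :: real
  assume e: "e > 0"
  define s t where "s = \<gamma> y + e / 2" and "t = \<gamma> z + e / 2"
  have s: "s > 0" and t: "t > 0"
    using gauge_nonneg[of y] gauge_nonneg[of z] e by (auto simp: s_def t_def)
  have ys: "(1 / s) *\<^sub>R y \<in> B" and zt: "(1 / t) *\<^sub>R z \<in> B"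
    using gauge_le_iff[OF s, of y] gauge_le_iff[OF t, of z] e by (auto simp: s_def t_def)
  have "(1 / (s + t)) *\<^sub>R (y + z) = (s / (s + t)) *\<^sub>R ((1 / s) *\<^sub>R y) + (t / (s + t)) *\<^sub>R ((1 / t) *\<^sub>R z)"
    using s t by (simp add: scaleR_add_right)
  also have "\<dots> \<in> B"
    using s t by (intro convexD[OF convex_B ys zt]) (simp_all add: add_divide_distrib[symmetric])
  finally have "\<gamma> (y + z) \<le> s + t"
    using gauge_le_iff[of "s + t" "y + z"] s t by simp
  then show "\<gamma> (y + z) \<le> \<gamma> y + \<gamma> z + e" by (simp add: s_def t_def)
qed

lemma gauge_diff_le: "\<gamma> y - \<gamma> z \<le> \<gamma> (y - z)"
  using gauge_triangle[of "y - z" z] by simp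

lemma gauge_le_norm: "\<exists>M>0. \<forall>y. \<gamma> y \<le> M * norm y"
proof -
  obtain \<rho> where \<rho>: "\<rho> > 0" "cball 0 \<rho> \<subseteq> B"
    using zero_in_interior_B mem_interior_cball by blast
  have "\<gamma> y \<le> (1 / \<rho>) * norm y" for y
  proof (cases "y = 0")
    case False
    then have t: "norm y / \<rho> > 0" using \<rho> by simp
    have "(1 / (norm y / \<rho>)) *\<^sub>R y \<in> cball 0 \<rho>" using False \<rho> by simp
    then have "\<gamma> y \<le> norm y / \<rho>" using gauge_le_iff[OF t] \<rho>(2) by blast
    then show ?thesis by simp
  qed simp
  then show ?thesis using \<rho> by (intro exI[of _ "1 / \<rho>"]) simp
qed

lemma norm_le_gauge: "\<exists>R>0. \<forall>y. norm y \<le> R * \<gamma> y"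
proof -
  obtain R where R: "R > 0" "\<And>x. x \<in> B \<Longrightarrow> norm x \<le> R"
    using compact_B compact_imp_bounded bounded_pos by metis
  have "norm y \<le> R * \<gamma> y" for y
  proof (rule field_le_epsilon)
    fix e :: real
    assume e: "e > 0"
    define t where "t = \<gamma> y + e / R"
    have t: "t > 0" using gauge_nonneg[of y] e R by (simp add: t_def add_nonneg_pos)
    have "(1 / t) *\<^sub>R y \<in> B"
      using gauge_le_iff[OF t, of y] e R by (simp add: t_def)
    then have "norm ((1 / t) *\<^sub>R y) \<le> R" by (rule R(2))
    then have "norm y \<le> R * t" using t by (simp add: divide_le_eq mult.commute)
    then show "norm y \<le> R * \<gamma> y + e" using R by (simp add: t_def algebra_simps)
  qed
  then show ?thesis using R by blast
qed

lemma gauge_pos: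
  assumes "y \<noteq> 0"
  shows "\<gamma> y > 0"
proof -
  obtain R where R: "R > 0" "norm y \<le> R * \<gamma> y" using norm_le_gauge by blast
  have "0 < norm y" using assms by simp
  with R(2) have "0 < R * \<gamma> y" by linarith
  with R(1) show ?thesis by (simp add: zero_less_mult_iff)
qed

lemma continuous_on_gauge: "continuous_on S \<gamma>"
proof -
  obtain M where M: "M > 0" "\<And>y. \<gamma> y \<le> M * norm y" using gauge_le_norm by blast
  have "\<bar>\<gamma> y - \<gamma> z\<bar> \<le> M * norm (y - z)" for y z
    using gauge_diff_le[of y z] gauge_diff_le[of z y] M(2)[of "y - z"] M(2)[of "z - y"]
    by (simp add: norm_minus_commute)
  then have "M-lipschitz_on S \<gamma>"
    using M(1) by (intro lipschitz_onI) (auto simp: dist_norm dist_real_def)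
  then show ?thesis by (rule lipschitz_on_continuous_on)
qed

lemma compact_gauge_sphere: "compact {y. \<gamma> y = 1}"
proof -
  obtain R where R: "\<And>y. norm y \<le> R * \<gamma> y" using norm_le_gauge by blast
  have "\<forall>y\<in>{y. \<gamma> y = 1}. norm y \<le> R" using R by (metis mem_Collect_eq mult.right_neutral)
  then have "bounded {y. \<gamma> y = 1}" unfolding bounded_iff by blast
  moreover have "closed {y. \<gamma> y = 1}"
    using continuous_on_gauge by (intro closed_Collect_eq continuous_intros) auto
  ultimately show ?thesis by (simp add: compact_eq_bounded_closed)
qed

lemma bounded_subset_gauge_ball:
  assumes "bounded K"
  shows "\<exists>r\<ge>0. \<forall>x\<in>K. \<gamma> x \<le> r"
proof -
  obtain c where "c > 0" and c: "\<And>x. x \<in> K \<Longrightarrow> norm x \<le> c"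
    using assms bounded_pos by blast
  obtain M where M: "M > 0" "\<And>y. \<gamma> y \<le> M * norm y" using gauge_le_norm by blast
  have "\<gamma> x \<le> M * c" if "x \<in> K" for x
    using M(2)[of x] mult_left_mono[OF c[OF that] less_imp_le[OF M(1)]] by linarith
  moreover have "M * c \<ge> 0" using M(1) \<open>c > 0\<close> by simp
  ultimately show ?thesis by blast
qed

section \<open>Supporting functionals and extreme points\<close>

definition dual_ball :: "'a set" where
  "dual_ball = {g. \<forall>z. g \<bullet> z \<le> \<gamma> z}"

lemma dual_ball_inner_le: "g \<in> dual_ball \<Longrightarrow> g \<bullet> v \<le> \<gamma> v"
  by (simp add: dual_ball_def)

lemma dual_ball_inner_ge: "g \<in> dual_ball \<Longrightarrow> - \<gamma> v \<le> g \<bullet> v"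
  using dual_ball_inner_le[of g "- v"] by simp

lemma extreme_point_supported:
  assumes "e extreme_point_of B"
  shows "\<exists>g\<in>dual_ball. g \<bullet> e = 1"
proof -
  have eB: "e \<in> B" using assms by (simp add: extreme_point_of_def)
  have "B \<noteq> {e}" using zero_in_interior_B by auto
  then have "e \<notin> rel_interior B" using extreme_point_not_in_REL_INTERIOR assms by blast
  then obtain a where a: "a \<noteq> 0" "\<And>y. y \<in> closure B \<Longrightarrow> a \<bullet> e \<le> a \<bullet> y"
      "\<And>y. y \<in> rel_interior B \<Longrightarrow> a \<bullet> e < a \<bullet> y"
    using supporting_hyperplane_relative_frontier[OF convex_B closure_subset[THEN subsetD, OF eB]]
    by blast
  have "0 \<in> rel_interior B" using zero_in_interior_B interior_subset_rel_interior by blast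
  then have ae: "a \<bullet> e < 0" using a(3) by fastforce
  define g where "g = (1 / (a \<bullet> e)) *\<^sub>R a"
  have gB: "g \<bullet> y \<le> 1" if "y \<in> B" for y
    using a(2)[of y] that closure_subset ae by (auto simp: g_def divide_le_eq)
  have "g \<bullet> y \<le> \<gamma> y" for y
  proof (cases "y = 0")
    case False
    then have t: "\<gamma> y > 0" by (rule gauge_pos)
    have "(1 / \<gamma> y) *\<^sub>R y \<in> B" using gauge_le_iff[OF t, of y] by simp
    then have "g \<bullet> ((1 / \<gamma> y) *\<^sub>R y) \<le> 1" by (rule gB)
    then show ?thesis using t by (simp add: divide_le_eq)
  qed simp
  moreover have "g \<bullet> e = 1" using ae by (simp add: g_def)
  ultimately show ?thesis by (auto simp: dual_ball_def)
qed

lemma gauge_extreme_point: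
  assumes "e extreme_point_of B"
  shows "\<gamma> e = 1"
proof -
  have "\<gamma> e \<le> 1" using assms gauge_le_one_iff by (simp add: extreme_point_of_def)
  moreover obtain g where "g \<in> dual_ball" "g \<bullet> e = 1"
    using extreme_point_supported[OF assms] by blast
  then have "1 \<le> \<gamma> e" using dual_ball_inner_le by metis
  ultimately show ?thesis by linarith
qed

lemma extreme_points_accumulate:
  assumes "\<not> polytope B"
  obtains z where "\<gamma> z = 1" "z islimpt {x. x extreme_point_of B}"
proof -
  let ?E = "{x. x extreme_point_of B}"
  have "infinite ?E"
    using Krein_Milman_Minkowski[OF compact_B convex_B] assms unfolding polytope_def by auto
  moreover have "?E \<subseteq> B" by (auto simp: extreme_point_of_def)
  ultimately obtain z where "z \<in> B" "z islimpt ?E"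
    using compact_B unfolding compact_eq_Bolzano_Weierstrass by blast
  moreover have "?E \<subseteq> {y. \<gamma> y = 1}" using gauge_extreme_point by blast
  ultimately have "z islimpt {y. \<gamma> y = 1}" using islimpt_subset by blast
  moreover have "closed {y. \<gamma> y = 1}" using compact_gauge_sphere compact_imp_closed by blast
  ultimately have "\<gamma> z = 1" using closed_limpt by blast
  with \<open>z islimpt ?E\<close> show ?thesis using that by blast
qed

text \<open>Since g \<bullet> y \<le> 1 and \<gamma> is subadditive, c + d = 1, so y lies on the segment [u, v].\<close>

lemma extreme_point_in_exposed_cone:
  assumes y: "y extreme_point_of B" and "u \<in> B" "v \<in> B"
    and g: "g \<in> dual_ball" "g \<bullet> u = 1" "g \<bullet> v = 1"
    and c: "c \<ge> 0" "d \<ge> 0" and yy: "y = c *\<^sub>R u + d *\<^sub>R v"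
  shows "y = u \<or> y = v"
proof -
  have gy: "\<gamma> y = 1" by (rule gauge_extreme_point[OF y])
  have "g \<bullet> y = c + d" using g by (simp add: yy inner_add_right)
  then have "c + d \<le> 1" using dual_ball_inner_le[OF g(1), of y] gy by simp
  moreover have "\<gamma> y \<le> c * \<gamma> u + d * \<gamma> v"
    using gauge_triangle[of "c *\<^sub>R u" "d *\<^sub>R v"] c by (simp add: yy gauge_scaleR)
  moreover have "\<gamma> u \<le> 1" "\<gamma> v \<le> 1" using \<open>u \<in> B\<close> \<open>v \<in> B\<close> gauge_le_one_iff by auto
  ultimately have "c + d = 1" using c gy mult_left_le[of "\<gamma> u" c] mult_left_le[of "\<gamma> v" d] by linarith
  then have "y \<in> closed_segment u v"
    using yy c by (auto simp: closed_segment_def intro!: exI[of _ d])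
  moreover have "y \<notin> open_segment u v" using y \<open>u \<in> B\<close> \<open>v \<in> B\<close> by (simp add: extreme_point_of_def)
  ultimately show ?thesis by (simp add: open_segment_def)
qed

lemma common_support_point_coeff_nonneg:
  assumes u: "u extreme_point_of B" and v: "v extreme_point_of B"
    and indep: "\<And>c d. c *\<^sub>R u + d *\<^sub>R v = 0 \<Longrightarrow> c = 0 \<and> d = 0"
    and gv: "gv \<in> dual_ball" "gv \<bullet> v = 1"
    and e: "\<gamma> e = 1" "gv \<bullet> e = 1" and eab: "e = \<alpha> *\<^sub>R u + \<beta> *\<^sub>R v" and "\<alpha> > 0"
  shows "\<beta> \<ge> 0"
proof (rule ccontr)
  assume "\<not> \<beta> \<ge> 0"
  have "u = (1 / \<alpha>) *\<^sub>R e + (- \<beta> / \<alpha>) *\<^sub>R v"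
    using \<open>\<alpha> > 0\<close> by (simp add: eab scaleR_add_right divide_inverse)
  moreover have "1 / \<alpha> \<ge> 0" "- \<beta> / \<alpha> \<ge> 0"
    using \<open>\<alpha> > 0\<close> \<open>\<not> \<beta> \<ge> 0\<close> by (simp_all add: divide_nonpos_pos)
  moreover have "e \<in> B" "v \<in> B"
    using e(1) gauge_le_one_iff[of e] v by (auto simp: extreme_point_of_def)
  ultimately have "u = e \<or> u = v"
    using extreme_point_in_exposed_cone[OF u _ _ gv(1) e(2) gv(2)] by blast
  moreover have "u \<noteq> e"
  proof
    assume "u = e"
    then have "(\<alpha> - 1) *\<^sub>R u + \<beta> *\<^sub>R v = 0" using eab by (simp add: algebra_simps)
    then show False using indep \<open>\<not> \<beta> \<ge> 0\<close> by fastforce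
  qed
  moreover have "u \<noteq> v" using indep[of 1 "- 1"] by auto
  ultimately show False by blast
qed

lemma extreme_point_in_cone_with_face_point:
  assumes y: "y extreme_point_of B" "a > 0" "b > 0" "y = a *\<^sub>R u + b *\<^sub>R v"
    and indep: "\<And>c d. c *\<^sub>R u + d *\<^sub>R v = 0 \<Longrightarrow> c = 0 \<and> d = 0"
    and "u \<in> B" and gu: "gu \<in> dual_ball" "gu \<bullet> u = 1" and e: "\<gamma> e = 1" "gu \<bullet> e = 1"
    and eab: "e = \<alpha> *\<^sub>R u + \<beta> *\<^sub>R v" and "\<beta> > 0" "b * \<alpha> \<le> a * \<beta>"
  shows "y = e"
proof -
  have "y = (a - b * \<alpha> / \<beta>) *\<^sub>R u + (b / \<beta>) *\<^sub>R e"
    using y(4) \<open>\<beta> > 0\<close> by (simp add: eab scaleR_add_right algebra_simps divide_inverse)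
  moreover have "a - b * \<alpha> / \<beta> \<ge> 0" "b / \<beta> \<ge> 0"
    using \<open>b * \<alpha> \<le> a * \<beta>\<close> \<open>\<beta> > 0\<close> y(3) by (simp_all add: field_simps)
  moreover have "e \<in> B" using e(1) gauge_le_one_iff[of e] by simp
  ultimately have "y = u \<or> y = e"
    using extreme_point_in_exposed_cone[OF y(1) \<open>u \<in> B\<close> _ gu e(2)] by blast
  moreover have "y \<noteq> u"
  proof
    assume "y = u"
    then have "(a - 1) *\<^sub>R u + b *\<^sub>R v = 0" using y(4) by (simp add: algebra_simps)
    then show False using indep y(3) by fastforce
  qed
  ultimately show ?thesis by blast
qed

lemma common_support_point_coeffs_nonneg:
  assumes u: "u extreme_point_of B" and v: "v extreme_point_of B"
    and indep: "\<And>c d. c *\<^sub>R u + d *\<^sub>R v = 0 \<Longrightarrow> c = 0 \<and> d = 0"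
    and gu: "gu \<in> dual_ball" "gu \<bullet> u = 1" and gv: "gv \<in> dual_ball" "gv \<bullet> v = 1"
    and e: "\<gamma> e = 1" "gu \<bullet> e = 1" "gv \<bullet> e = 1" and eab: "e = \<alpha> *\<^sub>R u + \<beta> *\<^sub>R v"
  shows "\<alpha> \<ge> 0 \<and> \<beta> \<ge> 0"
proof -
  have indep': "\<And>c d. c *\<^sub>R v + d *\<^sub>R u = 0 \<Longrightarrow> c = 0 \<and> d = 0"
    using indep by (metis add.commute)
  have \<beta>: "\<beta> \<ge> 0" if "\<alpha> > 0"
    using common_support_point_coeff_nonneg[OF u v indep gv e(1,3) eab that] .
  have \<alpha>: "\<alpha> \<ge> 0" if "\<beta> > 0"
    using common_support_point_coeff_nonneg[OF v u indep' gu e(1,2) _ that] eab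
    by (simp add: add.commute)
  have False if "\<alpha> \<le> 0" "\<beta> \<le> 0"
  proof -
    have "- 1 \<le> gu \<bullet> v" "- 1 \<le> gv \<bullet> u"
      using dual_ball_inner_ge[OF gu(1), of v] dual_ball_inner_ge[OF gv(1), of u]
        gauge_extreme_point[OF u] gauge_extreme_point[OF v] by auto
    then have "\<beta> * (gu \<bullet> v) \<le> - \<beta>" "\<alpha> * (gv \<bullet> u) \<le> - \<alpha>"
      using mult_left_mono_neg[OF _ that(2)] mult_left_mono_neg[OF _ that(1)] by force+
    moreover have "gu \<bullet> e = \<alpha> + \<beta> * (gu \<bullet> v)" "gv \<bullet> e = \<alpha> * (gv \<bullet> u) + \<beta>"
      using gu gv by (simp_all add: eab inner_add_right)
    ultimately show False using e that by linarith
  qed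
  with \<alpha> \<beta> show ?thesis by fastforce
qed

text \<open>If the supporting lines at u and v meet on the unit sphere at e, the boundary arc of B
  between u and v is the union of the segments [u, e] and [e, v], so e is the only extreme point
  strictly inside the cone spanned by u and v.\<close>

lemma extreme_point_in_cone_eq_common_support_point:
  assumes u: "u extreme_point_of B" and v: "v extreme_point_of B"
    and indep: "\<And>c d. c *\<^sub>R u + d *\<^sub>R v = 0 \<Longrightarrow> c = 0 \<and> d = 0"
    and gu: "gu \<in> dual_ball" "gu \<bullet> u = 1" and gv: "gv \<in> dual_ball" "gv \<bullet> v = 1"
    and e: "\<gamma> e = 1" "gu \<bullet> e = 1" "gv \<bullet> e = 1" and eab: "e = \<alpha> *\<^sub>R u + \<beta> *\<^sub>R v"
    and y: "y extreme_point_of B" "a > 0" "b > 0" "y = a *\<^sub>R u + b *\<^sub>R v"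
  shows "y = e"
proof -
  have "\<alpha> \<ge> 0" "\<beta> \<ge> 0"
    using common_support_point_coeffs_nonneg[OF u v indep gu gv e eab] by simp_all
  moreover have "\<alpha> \<noteq> 0 \<or> \<beta> \<noteq> 0" using e(1) eab by auto
  ultimately have pos: "\<alpha> > 0 \<or> \<beta> > 0" by linarith
  have uB: "u \<in> B" and vB: "v \<in> B" using u v by (auto simp: extreme_point_of_def)
  consider "b * \<alpha> \<le> a * \<beta>" | "a * \<beta> \<le> b * \<alpha>" by linarith
  then show ?thesis
  proof cases
    case 1
    have "\<beta> > 0"
    proof (rule ccontr)
      assume "\<not> \<beta> > 0"
      with \<open>\<beta> \<ge> 0\<close> pos have "\<beta> = 0" "\<alpha> > 0" by simp_all
      with 1 show False using mult_pos_pos[OF y(3) \<open>\<alpha> > 0\<close>] by simp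
    qed
    with 1 show ?thesis
      using extreme_point_in_cone_with_face_point[OF y indep uB gu e(1,2) eab] by blast
  next
    case 2
    have "\<alpha> > 0"
    proof (rule ccontr)
      assume "\<not> \<alpha> > 0"
      with \<open>\<alpha> \<ge> 0\<close> pos have "\<alpha> = 0" "\<beta> > 0" by simp_all
      with 2 show False using mult_pos_pos[OF y(2) \<open>\<beta> > 0\<close>] by simp
    qed
    moreover have "y = b *\<^sub>R v + a *\<^sub>R u" "e = \<beta> *\<^sub>R v + \<alpha> *\<^sub>R u"
      using y(4) eab by (simp_all add: add.commute)
    moreover have "\<And>c d. c *\<^sub>R v + d *\<^sub>R u = 0 \<Longrightarrow> c = 0 \<and> d = 0"
      using indep by (metis add.commute)
    ultimately show ?thesis
      using extreme_point_in_cone_with_face_point[OF y(1,3,2) _ _ vB gv e(1,3)] 2 by blast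
  qed
qed

lemma objective_two_points_plus_one:
  assumes "p \<noteq> 0" "x \<noteq> 0" "x \<noteq> p"
  shows "(\<Sum>s\<in>{0, p} \<union> {x}. wsum_weight {0, p} (\<lambda>_. 1) {x} (\<lambda>_. l) s * \<gamma> (z - s))
    = \<gamma> z + \<gamma> (z - p) + l * \<gamma> (z - x)"
proof -
  have "{0, p} \<union> {x} = insert 0 (insert p {x})" by auto
  with assms show ?thesis by (simp add: wsum_weight_def)
qed

lemma support_values_bounded_away_from_one:
  assumes "\<not> (\<exists>e. \<gamma> e = 1 \<and> g \<bullet> e = 1 \<and> h \<bullet> e = 1)" "g \<in> dual_ball" "h \<in> dual_ball"
  shows "\<exists>M<1. \<forall>d. \<gamma> d = 1 \<longrightarrow> min (g \<bullet> d) (h \<bullet> d) \<le> M"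
proof -
  obtain b :: 'a where "b \<noteq> 0" using nonzero_Basis nonempty_Basis by blast
  then have "\<gamma> ((1 / \<gamma> b) *\<^sub>R b) = 1" using gauge_pos[of b] by (simp add: gauge_scaleR)
  then have "{d. \<gamma> d = 1} \<noteq> {}" by blast
  moreover have "continuous_on {d. \<gamma> d = 1} (\<lambda>d. min (g \<bullet> d) (h \<bullet> d))"
    by (intro continuous_intros)
  ultimately obtain d0 where "d0 \<in> {d. \<gamma> d = 1}"
    and max: "\<forall>d\<in>{d. \<gamma> d = 1}. min (g \<bullet> d) (h \<bullet> d) \<le> min (g \<bullet> d0) (h \<bullet> d0)"
    using continuous_attains_sup[OF compact_gauge_sphere] by blast
  then have d0: "\<gamma> d0 = 1" "\<forall>d. \<gamma> d = 1 \<longrightarrow> min (g \<bullet> d) (h \<bullet> d) \<le> min (g \<bullet> d0) (h \<bullet> d0)"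
    by auto
  have "g \<bullet> d0 \<le> 1" "h \<bullet> d0 \<le> 1"
    using dual_ball_inner_le assms(2,3) d0(1) by metis+
  with assms(1) d0 have "min (g \<bullet> d0) (h \<bullet> d0) < 1" by force
  with d0 show ?thesis by blast
qed

text \<open>A better point y gives the unit vector d = (x - y) / \<gamma>(x - y) with g \<bullet> d > l - 1 and
  h \<bullet> d > l - 1, which is impossible once l - 1 exceeds the bound of the previous lemma.\<close>

lemma common_support_point_if_not_fermat_weber:
  assumes "p \<noteq> 0" "x \<noteq> 0" "x \<noteq> p"
    and not_fw: "\<And>l. 0 < l \<Longrightarrow> l < 2 \<Longrightarrow>
      x \<notin> fermat_weber_points \<gamma> ({0, p} \<union> {x}) (wsum_weight {0, p} (\<lambda>_. 1) {x} (\<lambda>_. l))"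
    and g: "g \<in> dual_ball" "g \<bullet> x = \<gamma> x" and h: "h \<in> dual_ball" "h \<bullet> (x - p) = \<gamma> (x - p)"
  shows "\<exists>e. \<gamma> e = 1 \<and> g \<bullet> e = 1 \<and> h \<bullet> e = 1"
proof (rule ccontr)
  assume "\<not> ?thesis"
  then obtain M where M: "M < 1" "\<And>d. \<gamma> d = 1 \<Longrightarrow> min (g \<bullet> d) (h \<bullet> d) \<le> M"
    using support_values_bounded_away_from_one g(1) h(1) by blast
  define l where "l = 1 + max M 0"
  have l: "0 < l" "l < 2" "M \<le> l - 1" using M(1) by (auto simp: l_def)
  obtain y where y: "\<gamma> y + \<gamma> (y - p) + l * \<gamma> (y - x) < \<gamma> x + \<gamma> (x - p)"
    using not_fw[OF l(1,2)]
    unfolding fermat_weber_points_def objective_two_points_plus_one[OF assms(1-3)]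
    by (auto simp: not_le)
  define c where "c = \<gamma> (x - y)"
  have "y \<noteq> x" using y by auto
  then have c: "c > 0" unfolding c_def by (simp add: gauge_pos)
  have "\<gamma> (y - x) = c" using gauge_uminus[of "x - y"] by (simp add: c_def)
  moreover have "\<gamma> x - \<gamma> y \<le> c" "\<gamma> (x - p) - \<gamma> (y - p) \<le> c"
    using gauge_diff_le[of x y] gauge_diff_le[of "x - p" "y - p"] by (simp_all add: c_def)
  moreover have "\<gamma> x - \<gamma> y \<le> g \<bullet> (x - y)" "\<gamma> (x - p) - \<gamma> (y - p) \<le> h \<bullet> (x - y)"
    using g h dual_ball_inner_le[OF g(1), of y] dual_ball_inner_le[OF h(1), of "y - p"]
    by (simp_all add: inner_diff_right)
  ultimately have "(l - 1) * c < g \<bullet> (x - y)" "(l - 1) * c < h \<bullet> (x - y)"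
    using y by (simp_all add: algebra_simps)
  then have "l - 1 < g \<bullet> ((1 / c) *\<^sub>R (x - y))" "l - 1 < h \<bullet> ((1 / c) *\<^sub>R (x - y))"
    using c by (simp_all add: pos_less_divide_eq)
  moreover have "\<gamma> ((1 / c) *\<^sub>R (x - y)) = 1"
    using c gauge_scaleR[of "1 / c" "x - y"] by (simp add: c_def)
  ultimately show False using M(2) l(3) by fastforce
qed

section \<open>Polyhedral gauges are uniformly robust\<close>

lemma polytope_gauge_eq_Max:
  assumes "polytope B"
  shows "\<exists>L. finite L \<and> L \<noteq> {} \<and> (\<forall>y. \<gamma> y = Max ((\<lambda>a. a \<bullet> y) ` L))"
proof -
  obtain F where F: "finite F" "B = \<Inter> F" "\<forall>h\<in>F. \<exists>a b. a \<noteq> 0 \<and> h = {x. a \<bullet> x \<le> b}"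
    using assms polytope_imp_polyhedron unfolding polyhedron_def by blast
  then obtain a b where ab: "\<And>h. h \<in> F \<Longrightarrow> a h \<noteq> 0 \<and> h = {x. a h \<bullet> x \<le> b h}"
    by metis
  obtain \<rho> where \<rho>: "\<rho> > 0" "cball 0 \<rho> \<subseteq> B"
    using zero_in_interior_B mem_interior_cball by blast
  have b_pos: "b h > 0" if h: "h \<in> F" for h
  proof -
    have "(\<rho> / norm (a h)) *\<^sub>R a h \<in> B" using \<rho> ab[OF h] by auto
    then have "(\<rho> / norm (a h)) *\<^sub>R a h \<in> h" using F(2) h by blast
    then have "a h \<bullet> ((\<rho> / norm (a h)) *\<^sub>R a h) \<le> b h" using ab[OF h] by blast
    moreover have "a h \<bullet> ((\<rho> / norm (a h)) *\<^sub>R a h) = \<rho> * norm (a h)"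
      using ab[OF h] by (simp add: inner_scaleR_right power2_norm_eq_inner[symmetric] power2_eq_square)
    ultimately have "\<rho> * norm (a h) \<le> b h" by simp
    moreover have "\<rho> * norm (a h) > 0" using ab[OF h] \<rho> by simp
    ultimately show ?thesis by linarith
  qed
  define L where "L = insert 0 ((\<lambda>h. (1 / b h) *\<^sub>R a h) ` F)"
  have L: "finite L" "L \<noteq> {}" using F by (auto simp: L_def)
  have "\<gamma> y = Max ((\<lambda>a. a \<bullet> y) ` L)" for y
  proof (rule nonneg_eq_if_same_pos_upper_bounds)
    fix t :: real
    assume t: "t > 0"
    have "\<gamma> y \<le> t \<longleftrightarrow> (\<forall>h\<in>F. a h \<bullet> ((1 / t) *\<^sub>R y) \<le> b h)"
      using gauge_le_iff[OF t] F(2) ab by blast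
    also have "\<dots> \<longleftrightarrow> (\<forall>h\<in>F. ((1 / b h) *\<^sub>R a h) \<bullet> y \<le> t)"
      using b_pos t by (simp add: divide_le_eq le_divide_eq mult.commute)
    also have "\<dots> \<longleftrightarrow> Max ((\<lambda>a. a \<bullet> y) ` L) \<le> t"
      using L t by (auto simp: L_def)
    finally show "\<gamma> y \<le> t \<longleftrightarrow> Max ((\<lambda>a. a \<bullet> y) ` L) \<le> t" .
  qed (use gauge_nonneg L in \<open>auto simp: L_def Max_ge_iff\<close>)
  with L show ?thesis by blast
qed

end

locale polyhedral_gauge = symmetric_convex_body +
  fixes L :: "'a set"
  assumes finite_L: "finite L" and L_nonempty: "L \<noteq> {}"
    and gauge_eq_Max: "\<gamma> y = Max ((\<lambda>a. a \<bullet> y) ` L)"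
begin

lemma inner_le_gauge: "a \<in> L \<Longrightarrow> a \<bullet> y \<le> \<gamma> y"
  using finite_L by (simp add: gauge_eq_Max)

definition active :: "'a set \<Rightarrow> 'a \<Rightarrow> 'a set" where
  "active D x = {a\<in>L. \<exists>s\<in>D. a \<bullet> (x - s) = \<gamma> (x - s)}"

definition has_common_direction :: "'a set \<Rightarrow> bool" where
  "has_common_direction I \<longleftrightarrow> (\<exists>e. e \<noteq> 0 \<and> (\<forall>a\<in>I. a \<bullet> e = \<gamma> e))"

lemma gap_sum_coercive:
  assumes "I \<subseteq> L" "\<not> has_common_direction I"
  shows "\<exists>m>0. \<forall>z. m * norm z \<le> (\<Sum>a\<in>I. \<gamma> z - a \<bullet> z)"
proof -
  define \<phi> where "\<phi> z = (\<Sum>a\<in>I. \<gamma> z - a \<bullet> z)" for z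
  have "finite I" using assms(1) finite_L finite_subset by blast
  have "continuous_on (sphere 0 1) \<phi>"
    unfolding \<phi>_def by (intro continuous_intros continuous_on_gauge)
  moreover have "sphere (0::'a) 1 \<noteq> {}" by (simp add: sphere_eq_empty)
  ultimately obtain z0 where z0: "z0 \<in> sphere 0 1" "\<And>z. z \<in> sphere 0 1 \<Longrightarrow> \<phi> z0 \<le> \<phi> z"
    using continuous_attains_inf[OF compact_sphere] by blast
  then have "z0 \<noteq> 0" by auto
  then obtain a where a: "a \<in> I" "a \<bullet> z0 \<noteq> \<gamma> z0"
    using assms(2) unfolding has_common_direction_def by blast
  have "\<phi> z0 > 0"
    unfolding \<phi>_def
    using a assms(1) inner_le_gauge \<open>finite I\<close>
    by (intro sum_pos2[of I a]) (force simp: less_le)+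
  moreover have "\<phi> z0 * norm z \<le> \<phi> z" for z
  proof (cases "z = 0")
    case False
    have "\<phi> z = norm z * \<phi> ((1 / norm z) *\<^sub>R z)"
      unfolding \<phi>_def sum_distrib_left
    proof (rule sum.cong[OF refl])
      fix a
      have "\<gamma> z = norm z * \<gamma> ((1 / norm z) *\<^sub>R z)"
        using gauge_scaleR[of "norm z" "(1 / norm z) *\<^sub>R z"] False by simp
      then show "\<gamma> z - a \<bullet> z = norm z * (\<gamma> ((1 / norm z) *\<^sub>R z) - a \<bullet> ((1 / norm z) *\<^sub>R z))"
        using False by (simp add: algebra_simps)
    qed
    moreover have "\<phi> z0 \<le> \<phi> ((1 / norm z) *\<^sub>R z)" using z0 False by simp
    ultimately show ?thesis by (simp add: mult.commute mult_left_mono)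
  qed (simp add: \<phi>_def)
  ultimately show ?thesis unfolding \<phi>_def by (metis mult.commute)
qed

lemma active_gap_le:
  assumes "finite D" "a \<in> active D x"
  shows "\<gamma> x - a \<bullet> x \<le> 2 * (\<Sum>s\<in>D. \<gamma> s)"
proof -
  obtain s where s: "s \<in> D" "a \<in> L" "a \<bullet> (x - s) = \<gamma> (x - s)"
    using assms(2) unfolding active_def by blast
  have "\<gamma> x \<le> \<gamma> (x - s) + \<gamma> s" using gauge_triangle[of "x - s" s] by simp
  moreover have "- (a \<bullet> s) \<le> \<gamma> s" using inner_le_gauge[OF s(2), of "- s"] by simp
  moreover have "\<gamma> s \<le> (\<Sum>s\<in>D. \<gamma> s)"
    using member_le_sum[OF s(1), of \<gamma>] assms(1) gauge_nonneg by blast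
  ultimately show ?thesis using s(3) by (simp add: inner_diff_right)
qed

lemma bounded_without_common_direction:
  assumes "finite D"
  shows "bounded {x. \<not> has_common_direction (active D x)}"
proof -
  define c where "c = real (card L) * (2 * (\<Sum>s\<in>D. \<gamma> s))"
  define bad where "bad = {I. I \<subseteq> L \<and> \<not> has_common_direction I}"
  have "{x. \<not> has_common_direction (active D x)} \<subseteq> (\<Union>I\<in>bad. {x. (\<Sum>a\<in>I. \<gamma> x - a \<bullet> x) \<le> c})"
  proof
    fix x
    assume x: "x \<in> {x. \<not> has_common_direction (active D x)}"
    have sub: "active D x \<subseteq> L" by (auto simp: active_def)
    have "(\<Sum>a\<in>active D x. \<gamma> x - a \<bullet> x) \<le> real (card (active D x)) * (2 * (\<Sum>s\<in>D. \<gamma> s))"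
      using sum_bounded_above[of "active D x", OF active_gap_le[OF assms]] by simp
    also have "\<dots> \<le> c"
      unfolding c_def using card_mono[OF finite_L sub] gauge_nonneg
      by (intro mult_right_mono) (auto intro: sum_nonneg)
    finally show "x \<in> (\<Union>I\<in>bad. {x. (\<Sum>a\<in>I. \<gamma> x - a \<bullet> x) \<le> c})"
      using x sub by (auto simp: bad_def)
  qed
  moreover have "bounded (\<Union>I\<in>bad. {x. (\<Sum>a\<in>I. \<gamma> x - a \<bullet> x) \<le> c})"
  proof (intro bounded_UN ballI)
    show "finite bad" using finite_L by (simp add: bad_def)
    fix I
    assume "I \<in> bad"
    then have "I \<subseteq> L" "\<not> has_common_direction I" by (auto simp: bad_def)
    then obtain m where m: "m > 0" "\<And>z. m * norm z \<le> (\<Sum>a\<in>I. \<gamma> z - a \<bullet> z)"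
      using gap_sum_coercive by blast
    have "{x. (\<Sum>a\<in>I. \<gamma> x - a \<bullet> x) \<le> c} \<subseteq> cball 0 (c / m)"
      using m by (auto simp: pos_le_divide_eq mult.commute intro: order_trans[OF m(2)])
    then show "bounded {x. (\<Sum>a\<in>I. \<gamma> x - a \<bullet> x) \<le> c}"
      using bounded_cball bounded_subset by blast
  qed
  ultimately show ?thesis by (rule bounded_subset[rotated])
qed

text \<open>Along a common direction e of the active functionals, the functionals that are active at
  x - s stay maximal for small steps and all the others keep a uniform slack.\<close>

lemma descent_along_common_direction:
  assumes "finite D" and e: "\<forall>a\<in>active D x. a \<bullet> e = \<gamma> e" "e \<noteq> 0"
  shows "\<exists>t>0. \<forall>s\<in>D. \<gamma> (x - t *\<^sub>R e - s) \<le> \<gamma> (x - s) - t * \<gamma> e"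
proof -
  define slack where "slack = (\<lambda>(s, a). \<gamma> (x - s) - a \<bullet> (x - s))"
  define P where "P = {(s, a). s \<in> D \<and> a \<in> L \<and> a \<bullet> (x - s) < \<gamma> (x - s)}"
  have "finite P"
    unfolding P_def by (rule finite_subset[of _ "D \<times> L"]) (use assms finite_L in auto)
  define \<delta> where "\<delta> = Min (insert 1 (slack ` P))"
  have \<delta>: "\<delta> > 0" "\<And>p. p \<in> P \<Longrightarrow> \<delta> \<le> slack p"
    using \<open>finite P\<close> by (auto simp: \<delta>_def P_def slack_def)
  have "\<gamma> e > 0" using e(2) by (rule gauge_pos)
  define t where "t = \<delta> / (2 * \<gamma> e)"
  have t: "t > 0" "2 * t * \<gamma> e = \<delta>" using \<delta>(1) \<open>\<gamma> e > 0\<close> by (simp_all add: t_def)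
  have "\<gamma> (x - t *\<^sub>R e - s) \<le> \<gamma> (x - s) - t * \<gamma> e" if s: "s \<in> D" for s
  proof -
    have "a \<bullet> (x - t *\<^sub>R e - s) \<le> \<gamma> (x - s) - t * \<gamma> e" if a: "a \<in> L" for a
    proof (cases "a \<bullet> (x - s) = \<gamma> (x - s)")
      case True
      then have "a \<bullet> e = \<gamma> e" using a s e(1) by (auto simp: active_def)
      with True show ?thesis by (simp add: inner_diff_right algebra_simps)
    next
      case False
      then have "(s, a) \<in> P" using inner_le_gauge[OF a, of "x - s"] a s by (auto simp: P_def less_le)
      then have "\<delta> \<le> \<gamma> (x - s) - a \<bullet> (x - s)" using \<delta>(2) by (force simp: slack_def)
      moreover have "- (t * (a \<bullet> e)) \<le> t * \<gamma> e"
        using mult_left_mono[OF inner_le_gauge[OF a, of "- e"], of t] t(1) by simp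
      ultimately show ?thesis using t(2) by (simp add: inner_diff_right algebra_simps)
    qed
    then show ?thesis using finite_L L_nonempty by (simp add: gauge_eq_Max[of "x - t *\<^sub>R e - s"])
  qed
  with t(1) show ?thesis by blast
qed

lemma not_fermat_weber_if_common_direction:
  assumes D: "finite D" "\<forall>s\<in>D. w s > 0" and C: "finite C" "\<forall>s\<in>C. v s > 0"
    and less: "sum v C < sum w D" and "has_common_direction (active D x)"
  shows "x \<notin> fermat_weber_points \<gamma> (D \<union> C) (wsum_weight D w C v)"
proof
  assume fw: "x \<in> fermat_weber_points \<gamma> (D \<union> C) (wsum_weight D w C v)"
  obtain e where e: "e \<noteq> 0" "\<forall>a\<in>active D x. a \<bullet> e = \<gamma> e"
    using \<open>has_common_direction (active D x)\<close> by (auto simp: has_common_direction_def)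
  obtain t where t: "t > 0" "\<And>s. s \<in> D \<Longrightarrow> \<gamma> (x - t *\<^sub>R e - s) \<le> \<gamma> (x - s) - t * \<gamma> e"
    using descent_along_common_direction[OF D(1) e(2,1)] by blast
  have "\<gamma> (x - t *\<^sub>R e - s) \<le> \<gamma> (x - s) + t * \<gamma> e" for s
    using gauge_triangle[of "x - s" "- (t *\<^sub>R e)"] gauge_scaleR[of t e] t(1)
    by (simp add: algebra_simps)
  then have "(\<Sum>s\<in>D \<union> C. wsum_weight D w C v s * \<gamma> ((x - t *\<^sub>R e) - s))
      < (\<Sum>s\<in>D \<union> C. wsum_weight D w C v s * \<gamma> (x - s))"
    using wsum_decreases[OF D C less, of "t * \<gamma> e"] t gauge_pos[OF e(1)] by simp
  with fw show False by (auto simp: fermat_weber_points_def not_le[symmetric])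
qed

lemma fermat_weber_points_bounded:
  assumes "finite D" "\<forall>s\<in>D. w s > 0"
  shows "\<exists>K. bounded K \<and> (\<forall>C v. finite C \<and> (\<forall>s\<in>C. v s > 0) \<and> 1 * sum v C < sum w D \<longrightarrow>
    fermat_weber_points \<gamma> (D \<union> C) (wsum_weight D w C v) \<subseteq> K)"
  using bounded_without_common_direction[OF assms(1)]
    not_fermat_weber_if_common_direction[OF assms]
  by (intro exI[of _ "{x. \<not> has_common_direction (active D x)}"]) auto

end

locale planar_convex_body = symmetric_convex_body B for B :: "(real^2) set"

lemma (in planar_convex_body) uniformly_robust_if_polytope:
  assumes "polytope B"
  shows "uniformly_robust \<gamma>"
proof -
  obtain L where "finite L" "L \<noteq> {}" "\<And>y. \<gamma> y = Max ((\<lambda>a. a \<bullet> y) ` L)"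
    using polytope_gauge_eq_Max[OF assms] by blast
  then interpret polyhedral_gauge B L by unfold_locales
  show ?thesis unfolding uniformly_robust_def using fermat_weber_points_bounded by blast
qed

section \<open>Planar determinants\<close>

definition det2 :: "real^2 \<Rightarrow> real^2 \<Rightarrow> real" where
  "det2 u v = u$1 * v$2 - u$2 * v$1"

definition rot :: "real^2 \<Rightarrow> real^2" where
  "rot z = vector [- (z$2), z$1]"

lemma inner_real2: "(x::real^2) \<bullet> y = x$1 * y$1 + x$2 * y$2"
  by (simp add: inner_vec_def sum_2)

lemma det2_self [simp]: "det2 u u = 0"
  by (simp add: det2_def)

lemma det2_commute: "det2 u v = - det2 v u"
  by (simp add: det2_def)

lemma rot_eq_0_iff [simp]: "rot z = 0 \<longleftrightarrow> z = 0"
  by (auto simp: rot_def vec_eq_iff forall_2)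

lemma det2_rot_left: "det2 (rot z) y = - (z \<bullet> y)"
  by (simp add: inner_real2 rot_def det2_def)

lemma det2_scaleR_eq: "det2 u v *\<^sub>R y = det2 y v *\<^sub>R u + det2 u y *\<^sub>R v"
  by (simp add: vec_eq_iff forall_2 det2_def algebra_simps)

lemma det2_coordinates:
  assumes "det2 u v \<noteq> 0"
  shows "y = (det2 y v / det2 u v) *\<^sub>R u + (det2 u y / det2 u v) *\<^sub>R v"
proof -
  have "y = (1 / det2 u v) *\<^sub>R (det2 y v *\<^sub>R u + det2 u y *\<^sub>R v)"
    using assms by (simp add: det2_scaleR_eq[of u v y, symmetric])
  then show ?thesis by (simp add: scaleR_add_right)
qed

lemma det2_independent:
  assumes "det2 u v \<noteq> 0" "c *\<^sub>R u + d *\<^sub>R v = 0"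
  shows "c = 0 \<and> d = 0"
proof -
  have "c * det2 u v = det2 (c *\<^sub>R u + d *\<^sub>R v) v" "d * det2 u v = det2 u (c *\<^sub>R u + d *\<^sub>R v)"
    by (simp_all add: det2_def algebra_simps)
  then have "c * det2 u v = 0" "d * det2 u v = 0" unfolding assms(2) by (simp_all add: det2_def)
  with assms(1) show ?thesis by simp
qed

lemma cone_coordinates_pos:
  assumes "det2 u v > 0" "det2 u y > 0" "det2 y v > 0"
  shows "\<exists>c d. c > 0 \<and> d > 0 \<and> y = c *\<^sub>R u + d *\<^sub>R v"
  using det2_coordinates[of u v y] assms by (intro exI conjI) (auto intro: divide_pos_pos)

lemma det2_inner_self:
  "det2 y y' * (z \<bullet> z) = (z \<bullet> y) * (rot z \<bullet> y') - (rot z \<bullet> y) * (z \<bullet> y')"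
  by (simp add: inner_real2 rot_def det2_def algebra_simps)

lemma det2_scaleR_rot: "(z \<bullet> y) *\<^sub>R y' - (z \<bullet> y') *\<^sub>R y = det2 y y' *\<^sub>R rot z"
  by (simp add: vec_eq_iff forall_2 inner_real2 rot_def det2_def algebra_simps)

lemma abs_det2_le: "\<bar>det2 u v\<bar> \<le> 2 * norm u * norm v"
proof -
  have entry: "\<bar>u$i * v$j\<bar> \<le> norm u * norm v" for i j
    by (simp add: abs_mult mult_mono component_le_norm_cart)
  have "\<bar>det2 u v\<bar> \<le> \<bar>u$1 * v$2\<bar> + \<bar>u$2 * v$1\<bar>" by (simp add: det2_def)
  with entry[of 1 2] entry[of 2 1] show ?thesis by linarith
qed

lemma rot_eq_det2_combination:
  assumes "det2 y y' \<noteq> 0"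
  shows "rot z = ((z \<bullet> y) / det2 y y') *\<^sub>R y' - ((z \<bullet> y') / det2 y y') *\<^sub>R y"
proof -
  have "det2 (rot z) y' = - (z \<bullet> y')" "det2 y (rot z) = z \<bullet> y"
    using det2_rot_left[of z] det2_commute[of y "rot z"] by simp_all
  then have "rot z = (- (z \<bullet> y') / det2 y y') *\<^sub>R y + ((z \<bullet> y) / det2 y y') *\<^sub>R y'"
    using det2_coordinates[OF assms, of "rot z"] by simp
  then show ?thesis by simp
qed

lemma inner_gt_half_if_near:
  fixes y z :: "'a::real_inner"
  assumes "norm (y - z) < \<epsilon>" "\<epsilon> \<le> norm z / 4"
  shows "z \<bullet> y > (z \<bullet> z) / 2"
proof -
  have "\<bar>z \<bullet> (y - z)\<bar> \<le> norm z * norm (y - z)" by (rule Cauchy_Schwarz_ineq2)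
  also have "\<dots> \<le> norm z * (norm z / 4)"
    using assms by (intro mult_left_mono) auto
  finally have "\<bar>z \<bullet> (y - z)\<bar> \<le> (z \<bullet> z) / 4"
    by (simp add: power2_norm_eq_inner[symmetric] power2_eq_square)
  moreover have "\<epsilon> > 0" using assms(1) norm_ge_zero[of "y - z"] by linarith
  then have "z \<bullet> z > 0" using assms(2) by auto
  moreover have "z \<bullet> y = z \<bullet> z + z \<bullet> (y - z)" by (simp add: inner_diff_right)
  ultimately show ?thesis by linarith
qed

lemma abs_det2_le_if_near:
  fixes y y' z :: "real^2"
  assumes "norm (y - z) < \<epsilon>" "norm (y' - z) < \<epsilon>" "\<epsilon> \<le> 1"
  shows "\<bar>det2 y y'\<bar> \<le> \<epsilon> * (4 * norm z + 2)"
proof -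
  have "norm y' \<le> norm z + 1"
    using assms norm_triangle_ineq[of "y' - z" z] by simp
  then have "\<bar>det2 (y - z) y'\<bar> \<le> 2 * \<epsilon> * (norm z + 1)"
    using abs_det2_le[of "y - z" y'] assms(1)
    by (smt (verit, best) mult_mono mult_nonneg_nonneg norm_ge_zero)
  moreover have "\<bar>det2 z (y' - z)\<bar> \<le> 2 * norm z * \<epsilon>"
    using abs_det2_le[of z "y' - z"] assms(2) by (smt (verit) mult_left_mono norm_ge_zero)
  moreover have "det2 y y' = det2 (y - z) y' + det2 z (y' - z)"
    by (simp add: det2_def algebra_simps)
  ultimately show ?thesis by (simp add: algebra_simps abs_le_iff)
qed

lemma det2_pos_if_slope_less:
  assumes "z \<noteq> 0" "z \<bullet> y > 0" "z \<bullet> y' > 0"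
    and "(rot z \<bullet> y) / (z \<bullet> y) < (rot z \<bullet> y') / (z \<bullet> y')"
  shows "det2 y y' > 0"
proof -
  have "(rot z \<bullet> y) * (z \<bullet> y') < (rot z \<bullet> y') * (z \<bullet> y)"
    using assms(2-4) by (simp add: divide_less_eq field_simps)
  then have "det2 y y' * (z \<bullet> z) > 0" unfolding det2_inner_self by (simp add: algebra_simps)
  moreover have "z \<bullet> z > 0" using assms(1) by simp
  ultimately show ?thesis by (simp add: zero_less_mult_iff)
qed

section \<open>Non-polyhedral planar gauges are not uniformly robust\<close>

lemma infinite_imp_four_increasing:
  fixes T :: "real set"
  assumes "infinite T"
  obtains a b c d where "a \<in> T" "b \<in> T" "c \<in> T" "d \<in> T" "a < b" "b < c" "c < d"
proof -
  obtain F where F: "F \<subseteq> T" "finite F" "card F = 4"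
    using infinite_arbitrarily_large[OF assms] by blast
  obtain l where l: "sorted_wrt (<) l" "set l = F" "length l = card F"
    using finite_set_strict_sorted[OF F(2)] by blast
  have "l ! i < l ! j" if "i < j" "j < 4" for i j
    using sorted_wrt_nth_less[OF l(1) that(1)] that l(3) F(3) by simp
  moreover have "l ! i \<in> T" if "i < 4" for i
    using that l F nth_mem by (metis subsetD)
  ultimately show ?thesis using that[of "l ! 0" "l ! 1" "l ! 2" "l ! 3"] by simp
qed

text \<open>Two positively oriented points close to z span a very thin cone around z, so writing
  rot z in terms of them needs a large coefficient; the bound on it comes from
  det2 y y' = O(\<epsilon>) while z \<bullet> y stays of order |z|^2.\<close>

lemma rot_eq_large_combination:
  fixes z :: "real^2"
  assumes "z \<noteq> 0"
  shows "\<exists>\<epsilon>>0. \<forall>y y'. norm (y - z) < \<epsilon> \<longrightarrow> norm (y' - z) < \<epsilon> \<longrightarrow> det2 y y' > 0 \<longrightarrow>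
    (\<exists>a b. a > r \<and> b > 0 \<and> rot z = a *\<^sub>R y' - b *\<^sub>R y)"
proof -
  define R where "R = max r 0 + 1"
  define n where "n = z \<bullet> z"
  have R: "R \<ge> 1" "r < R" and n: "n > 0" using assms by (auto simp: R_def n_def)
  have c: "4 * norm z + 2 > 0" using norm_ge_zero[of z] by linarith
  define \<epsilon> where "\<epsilon> = min 1 (min (norm z / 4) (n / (4 * R) / (4 * norm z + 2)))"
  have "\<epsilon> > 0" using assms n R c by (simp add: \<epsilon>_def)
  moreover have "\<epsilon> \<le> 1" "\<epsilon> \<le> norm z / 4"
    unfolding \<epsilon>_def by (rule min.cobounded1, rule min.coboundedI2[OF min.cobounded1])
  ultimately have \<epsilon>: "\<epsilon> > 0" "\<epsilon> \<le> 1" "\<epsilon> \<le> norm z / 4" by blast+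
  have "\<epsilon> \<le> n / (4 * R) / (4 * norm z + 2)"
    unfolding \<epsilon>_def by (rule min.coboundedI2[OF min.cobounded2])
  then have \<epsilon>_det: "\<epsilon> * (4 * norm z + 2) \<le> n / (4 * R)"
    using pos_le_divide_eq[OF c] by blast
  have "\<exists>a b. a > r \<and> b > 0 \<and> rot z = a *\<^sub>R y' - b *\<^sub>R y"
    if y: "norm (y - z) < \<epsilon>" "norm (y' - z) < \<epsilon>" and d: "det2 y y' > 0" for y y'
  proof -
    have zy: "z \<bullet> y > n / 2" "z \<bullet> y' > n / 2"
      using inner_gt_half_if_near[OF y(1) \<epsilon>(3)] inner_gt_half_if_near[OF y(2) \<epsilon>(3)]
      by (simp_all add: n_def)
    have "det2 y y' \<le> n / (4 * R)"
      using abs_det2_le_if_near[OF y \<epsilon>(2)] \<epsilon>_det by simp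
    then have "2 * R * det2 y y' < z \<bullet> y"
      using zy R n by (simp add: field_simps)
    then have "(z \<bullet> y) / det2 y y' > 2 * R" using d by (simp add: pos_less_divide_eq)
    then have "(z \<bullet> y) / det2 y y' > r" using R by linarith
    moreover have "(z \<bullet> y') / det2 y y' > 0" using d zy n by simp
    moreover have "rot z = ((z \<bullet> y) / det2 y y') *\<^sub>R y' - ((z \<bullet> y') / det2 y y') *\<^sub>R y"
      using d by (intro rot_eq_det2_combination) simp
    ultimately show ?thesis by blast
  qed
  with \<epsilon>(1) show ?thesis by blast
qed

context planar_convex_body
begin

lemma eq_if_same_slope:
  assumes "z \<noteq> 0" "\<gamma> y = 1" "\<gamma> y' = 1" "z \<bullet> y > 0" "z \<bullet> y' > 0"
    and "(rot z \<bullet> y) / (z \<bullet> y) = (rot z \<bullet> y') / (z \<bullet> y')"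
  shows "y = y'"
proof -
  have "det2 y y' * (z \<bullet> z) = 0"
    using assms(4-6) unfolding det2_inner_self by (simp add: field_simps)
  then have "det2 y y' = 0" using assms(1) by simp
  then have "(z \<bullet> y) *\<^sub>R y' = (z \<bullet> y') *\<^sub>R y" using det2_scaleR_rot[of z y y'] by simp
  then have "(1 / (z \<bullet> y)) *\<^sub>R ((z \<bullet> y) *\<^sub>R y') = (1 / (z \<bullet> y)) *\<^sub>R ((z \<bullet> y') *\<^sub>R y)"
    by simp
  then have y': "y' = ((z \<bullet> y') / (z \<bullet> y)) *\<^sub>R y" using assms(4) by simp
  then have "(z \<bullet> y') / (z \<bullet> y) = 1"
    using gauge_scaleR[of "(z \<bullet> y') / (z \<bullet> y)" y] assms(2-5) by simp
  with y' show ?thesis by simp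
qed

text \<open>Ordering points near z by the slope (rot z \<bullet> y) / (z \<bullet> y); on the unit sphere of \<gamma> the
  slope is injective, so infinitely many such points give four in counterclockwise order.\<close>

lemma four_points_counterclockwise:
  assumes z: "z \<noteq> 0" "z islimpt E" and E: "\<And>y. y \<in> E \<Longrightarrow> \<gamma> y = 1" and "\<epsilon> > 0"
  obtains y1 y2 y3 y4 where "y1 \<in> E" "y2 \<in> E" "y3 \<in> E" "y4 \<in> E"
    "norm (y1 - z) < \<epsilon>" "norm (y4 - z) < \<epsilon>"
    "det2 y1 y2 > 0" "det2 y1 y3 > 0" "det2 y1 y4 > 0"
    "det2 y2 y3 > 0" "det2 y2 y4 > 0" "det2 y3 y4 > 0"
proof -
  define Eb where "Eb = E \<inter> ball z (min \<epsilon> (norm z / 4))"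
  have near: "norm (y - z) < \<epsilon>" "norm (y - z) < norm z / 4" if "y \<in> Eb" for y
    using that by (auto simp: Eb_def dist_norm norm_minus_commute)
  have pos: "z \<bullet> y > 0" if "y \<in> Eb" for y
  proof -
    have "z \<bullet> z > 0" using z(1) by simp
    with inner_gt_half_if_near[OF near(2)[OF that] order_refl] show ?thesis by linarith
  qed
  define \<sigma> where "\<sigma> y = (rot z \<bullet> y) / (z \<bullet> y)" for y
  have det_pos: "det2 y y' > 0" if "y \<in> Eb" "y' \<in> Eb" "\<sigma> y < \<sigma> y'" for y y'
    using det2_pos_if_slope_less[OF z(1) pos[OF that(1)] pos[OF that(2)]] that(3)
    by (simp add: \<sigma>_def)
  have "inj_on \<sigma> Eb"
    using eq_if_same_slope[OF z(1)] E pos by (intro inj_onI) (auto simp: \<sigma>_def Eb_def)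
  moreover have "infinite Eb"
    using z(2) \<open>\<epsilon> > 0\<close> z(1) unfolding Eb_def islimpt_eq_infinite_ball by simp
  ultimately have "infinite (\<sigma> ` Eb)" using finite_imageD by blast
  then obtain s1 s2 s3 s4 where "s1 \<in> \<sigma> ` Eb" "s2 \<in> \<sigma> ` Eb" "s3 \<in> \<sigma> ` Eb" "s4 \<in> \<sigma> ` Eb"
    and s: "s1 < s2" "s2 < s3" "s3 < s4"
    by (rule infinite_imp_four_increasing)
  then obtain y1 y2 y3 y4 where y: "y1 \<in> Eb" "y2 \<in> Eb" "y3 \<in> Eb" "y4 \<in> Eb"
    and "\<sigma> y1 = s1" "\<sigma> y2 = s2" "\<sigma> y3 = s3" "\<sigma> y4 = s4"
    by blast
  with s have "det2 y1 y2 > 0" "det2 y1 y3 > 0" "det2 y1 y4 > 0"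
    "det2 y2 y3 > 0" "det2 y2 y4 > 0" "det2 y3 y4 > 0"
    by (auto intro!: det_pos)
  with y near show ?thesis using that by (auto simp: Eb_def)
qed

lemma far_points_not_fermat_weber:
  assumes "uniformly_robust \<gamma>" "p \<noteq> 0"
  obtains r where "r \<ge> 0" "\<And>x l. r < \<gamma> x \<Longrightarrow> 0 < l \<Longrightarrow> l < 2 \<Longrightarrow>
    x \<notin> fermat_weber_points \<gamma> ({0, p} \<union> {x}) (wsum_weight {0, p} (\<lambda>_. 1) {x} (\<lambda>_. l))"
proof -
  have "sum (\<lambda>_. 1::real) {0, p} = 2" using assms(2) by simp
  then obtain K where "bounded K"
    and K: "\<And>C v. finite C \<Longrightarrow> (\<forall>s\<in>C. v s > 0) \<Longrightarrow> sum v C < 2 \<Longrightarrow>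
      fermat_weber_points \<gamma> ({0, p} \<union> C) (wsum_weight {0, p} (\<lambda>_. 1) C v) \<subseteq> K"
    using assms(1)[unfolded uniformly_robust_def, rule_format, of "{0, p}" "\<lambda>_. 1"] by auto
  obtain r where "r \<ge> 0" and r: "\<And>x. x \<in> K \<Longrightarrow> \<gamma> x \<le> r"
    using bounded_subset_gauge_ball[OF \<open>bounded K\<close>] by blast
  have "x \<notin> fermat_weber_points \<gamma> ({0, p} \<union> {x}) (wsum_weight {0, p} (\<lambda>_. 1) {x} (\<lambda>_. l))"
    if "r < \<gamma> x" "0 < l" "l < 2" for x l
  proof -
    have "fermat_weber_points \<gamma> ({0, p} \<union> {x}) (wsum_weight {0, p} (\<lambda>_. 1) {x} (\<lambda>_. l)) \<subseteq> K"
      using that(2,3) by (intro K) auto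
    moreover have "x \<notin> K" using r that(1) by force
    ultimately show ?thesis by blast
  qed
  with \<open>r \<ge> 0\<close> show ?thesis using that by blast
qed

text \<open>The cone spanned by y1 and y4 contains the two further extreme points y2 and y3, while a
  common point of the supporting lines at y1 and y4 on the unit sphere would be the only one.\<close>

lemma no_common_support_point_across_extreme_points:
  assumes ext: "y1 extreme_point_of B" "y2 extreme_point_of B" "y3 extreme_point_of B"
      "y4 extreme_point_of B"
    and det: "det2 y1 y4 > 0" "det2 y1 y2 > 0" "det2 y2 y4 > 0" "det2 y1 y3 > 0" "det2 y3 y4 > 0"
    and "y2 \<noteq> y3"
    and g: "g \<in> dual_ball" "g \<bullet> y4 = 1" and h: "h \<in> dual_ball" "h \<bullet> y1 = 1"
  shows "\<not> (\<exists>e. \<gamma> e = 1 \<and> g \<bullet> e = 1 \<and> h \<bullet> e = 1)"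
proof
  assume "\<exists>e. \<gamma> e = 1 \<and> g \<bullet> e = 1 \<and> h \<bullet> e = 1"
  then obtain e where e: "\<gamma> e = 1" "h \<bullet> e = 1" "g \<bullet> e = 1" by blast
  have indep: "c = 0 \<and> d = 0" if "c *\<^sub>R y1 + d *\<^sub>R y4 = 0" for c d
    using det(1) that by (intro det2_independent) auto
  have e_coords: "e = (det2 e y4 / det2 y1 y4) *\<^sub>R y1 + (det2 y1 e / det2 y1 y4) *\<^sub>R y4"
    using det(1) by (intro det2_coordinates) simp
  note in_cone_eq = extreme_point_in_cone_eq_common_support_point[OF ext(1,4) _ h g e e_coords]
  obtain c2 d2 where y2: "c2 > 0" "d2 > 0" "y2 = c2 *\<^sub>R y1 + d2 *\<^sub>R y4"
    using cone_coordinates_pos[OF det(1-3)] by blast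
  obtain c3 d3 where y3: "c3 > 0" "d3 > 0" "y3 = c3 *\<^sub>R y1 + d3 *\<^sub>R y4"
    using cone_coordinates_pos[OF det(1,4,5)] by blast
  have "y2 = e" "y3 = e"
    using in_cone_eq[OF _ ext(2) y2] in_cone_eq[OF _ ext(3) y3] indep by blast+
  with \<open>y2 \<noteq> y3\<close> show False by simp
qed

lemma polytope_if_uniformly_robust:
  assumes "uniformly_robust \<gamma>"
  shows "polytope B"
proof (rule ccontr)
  let ?E = "{x. x extreme_point_of B}"
  assume "\<not> polytope B"
  then obtain z where z: "\<gamma> z = 1" "z islimpt ?E" by (rule extreme_points_accumulate)
  then have "z \<noteq> 0" by auto
  define p where "p = rot z"
  have "p \<noteq> 0" using \<open>z \<noteq> 0\<close> by (simp add: p_def)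
  obtain r where "r \<ge> 0" and not_fw: "\<And>x l. r < \<gamma> x \<Longrightarrow> 0 < l \<Longrightarrow> l < 2 \<Longrightarrow>
      x \<notin> fermat_weber_points \<gamma> ({0, p} \<union> {x}) (wsum_weight {0, p} (\<lambda>_. 1) {x} (\<lambda>_. l))"
    using far_points_not_fermat_weber[OF assms \<open>p \<noteq> 0\<close>] by blast
  obtain \<epsilon> where "\<epsilon> > 0" and \<epsilon>: "\<And>y y'. norm (y - z) < \<epsilon> \<Longrightarrow> norm (y' - z) < \<epsilon> \<Longrightarrow>
      det2 y y' > 0 \<Longrightarrow> \<exists>a b. a > r \<and> b > 0 \<and> rot z = a *\<^sub>R y' - b *\<^sub>R y"
    using rot_eq_large_combination[OF \<open>z \<noteq> 0\<close>, of r] by blast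
  have "\<And>y. y \<in> ?E \<Longrightarrow> \<gamma> y = 1" using gauge_extreme_point by blast
  then obtain y1 y2 y3 y4 where y: "y1 \<in> ?E" "y2 \<in> ?E" "y3 \<in> ?E" "y4 \<in> ?E"
    and near: "norm (y1 - z) < \<epsilon>" "norm (y4 - z) < \<epsilon>"
    and det: "det2 y1 y2 > 0" "det2 y1 y3 > 0" "det2 y1 y4 > 0"
      "det2 y2 y3 > 0" "det2 y2 y4 > 0" "det2 y3 y4 > 0"
    by (rule four_points_counterclockwise[OF \<open>z \<noteq> 0\<close> z(2) _ \<open>\<epsilon> > 0\<close>])
  obtain a b where ab: "a > r" "b > 0" "p = a *\<^sub>R y4 - b *\<^sub>R y1"
    using \<epsilon>[OF near det(3)] by (auto simp: p_def)
  define x where "x = a *\<^sub>R y4"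
  have "\<gamma> y1 = 1" "\<gamma> y4 = 1" using y gauge_extreme_point by auto
  then have gx: "\<gamma> x = a" "\<gamma> (x - p) = b"
    using ab \<open>r \<ge> 0\<close> gauge_scaleR[of a y4] gauge_scaleR[of b y1] by (auto simp: x_def)
  then have "x \<noteq> 0" "x \<noteq> p" using ab \<open>r \<ge> 0\<close> by auto
  obtain g h where g: "g \<in> dual_ball" "g \<bullet> y4 = 1" and h: "h \<in> dual_ball" "h \<bullet> y1 = 1"
    using extreme_point_supported y(1,4) by blast
  have "g \<bullet> x = \<gamma> x" "h \<bullet> (x - p) = \<gamma> (x - p)"
    using g(2) h(2) gx ab(3) by (simp_all add: x_def)
  moreover have "\<And>l. 0 < l \<Longrightarrow> l < 2 \<Longrightarrow>
      x \<notin> fermat_weber_points \<gamma> ({0, p} \<union> {x}) (wsum_weight {0, p} (\<lambda>_. 1) {x} (\<lambda>_. l))"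
    using not_fw ab(1) gx(1) by simp
  ultimately have "\<exists>e. \<gamma> e = 1 \<and> g \<bullet> e = 1 \<and> h \<bullet> e = 1"
    using common_support_point_if_not_fermat_weber[OF \<open>p \<noteq> 0\<close> \<open>x \<noteq> 0\<close> \<open>x \<noteq> p\<close> _ g(1) _ h(1)]
    by blast
  moreover have "y2 \<noteq> y3" using det(4) by auto
  moreover have "y1 extreme_point_of B" "y2 extreme_point_of B" "y3 extreme_point_of B"
    "y4 extreme_point_of B" using y by simp_all
  ultimately show False
    using no_common_support_point_across_extreme_points[OF _ _ _ _ det(3,1,5,2,6) _ g h] by blast
qed

end

theorem mainTheorem17:
  fixes B :: "(real^2) set"
  assumes "norm_ball B"
  shows "uniformly_robust (gauge_of B) \<longleftrightarrow> polytope B"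
proof -
  interpret planar_convex_body B by unfold_locales (rule assms)
  show ?thesis using polytope_if_uniformly_robust uniformly_robust_if_polytope by blast
qed

end
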